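(* The class of data languages accepted by SAFA is not closed under complementation: there exists a data language $L\subseteq(\Sigma\times D)^*$ accepted by some SAFA such that no SAFA accepts $(\Sigma\times D)^*\setminus L$.
   Context: $D$ is a fixed countably infinite set of data values; for a finite alphabet $\Sigma$, data words are elements of $(\Sigma\times D)^*$. A set augmented finite automaton (SAFA) is a tuple $M=(Q,\Sigma\times D,q_0,F,H,\delta)$: $Q$ finite set of states, $q_0\in Q$ initial, $F\subseteq Q$ final, $H=\{h_1,\dots,h_m\}$ a finite collection of (names of) sets of data values, $\delta\subseteq Q\times\Sigma\times C\times OP\times Q$ with $C=\{p(h_i),\,!p(h_i): h_i\in H\}$, $OP=\{-\}\cup\{\mathsf{ins}(h_i):h_i\in H\}$. Configurations are $(q,\langle S_1,\dots,S_m\rangle)$ with $S_i\subseteq D$ finite; initially state $q_0$ and all sets empty. On reading $(a,d)$, a transition $(q,a,\alpha,op,q')$ from the current state may be taken if $\alpha=p(h_i)$ and $d\in S_i$, or $\alpha=\,!p(h_i)$ and $d\notin S_i$; then the state becomes $q'$ and if $op=\mathsf{ins}(h_j)$ the value $d$ is added to $S_j$ ($op=-$ changes nothing). A word is accepted if some run reads it entirely and ends in $F$; $L(M)$ is the set of accepted words. *)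

theory Defs
  imports Main "HOL-Library.Countable_Set"
begin

(* Conditions p(h_i) / !p(h_i) and operations - / ins(h_i); set names are naturals *)
datatype cond = P nat | NP nat
datatype op = Nop | Ins nat

record 'a safa =
  states :: "nat set"
  init   :: nat
  final  :: "nat set"
  names  :: "nat set"
  delta  :: "(nat \<times> 'a \<times> cond \<times> op \<times> nat) set"

definition wf_safa :: "'a set \<Rightarrow> 'a safa \<Rightarrow> bool" where
  "wf_safa Sig M \<longleftrightarrow> finite (states M) \<and> init M \<in> states M \<and> final M \<subseteq> states M
     \<and> finite (names M)
     \<and> (\<forall>(q,a,c,oper,q') \<in> delta M. q \<in> states M \<and> a \<in> Sig \<and> q' \<in> states M
          \<and> (case c of P h \<Rightarrow> h \<in> names M | NP h \<Rightarrow> h \<in> names M)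
          \<and> (case oper of Nop \<Rightarrow> True | Ins h \<Rightarrow> h \<in> names M))"

type_synonym 'd config = "nat \<times> (nat \<Rightarrow> 'd set)"

definition cond_holds :: "cond \<Rightarrow> (nat \<Rightarrow> 'd set) \<Rightarrow> 'd \<Rightarrow> bool" where
  "cond_holds c S d = (case c of P h \<Rightarrow> d \<in> S h | NP h \<Rightarrow> d \<notin> S h)"

definition apply_op :: "op \<Rightarrow> (nat \<Rightarrow> 'd set) \<Rightarrow> 'd \<Rightarrow> (nat \<Rightarrow> 'd set)" where
  "apply_op oper S d = (case oper of Nop \<Rightarrow> S | Ins h \<Rightarrow> S(h := insert d (S h)))"

definition step :: "'a safa \<Rightarrow> 'd config \<Rightarrow> 'a \<times> 'd \<Rightarrow> 'd config \<Rightarrow> bool" where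
  "step M cf x cf' \<longleftrightarrow> (\<exists>c oper. (fst cf, fst x, c, oper, fst cf') \<in> delta M
      \<and> cond_holds c (snd cf) (snd x) \<and> snd cf' = apply_op oper (snd cf) (snd x))"

fun run :: "'a safa \<Rightarrow> 'd config \<Rightarrow> ('a \<times> 'd) list \<Rightarrow> 'd config \<Rightarrow> bool" where
  "run M cf [] cf' \<longleftrightarrow> cf' = cf"
| "run M cf (x # w) cf' \<longleftrightarrow> (\<exists>cf''. step M cf x cf'' \<and> run M cf'' w cf')"

definition lang :: "'a safa \<Rightarrow> ('a \<times> 'd) list set" where
  "lang M = {w. \<exists>cf. run M (init M, \<lambda>_. {}) w cf \<and> fst cf \<in> final M}"

definition data_words :: "'a set \<Rightarrow> ('a \<times> 'd) list set" where
  "data_words Sig = {w. \<forall>x \<in> set w. fst x \<in> Sig}"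

end

(*
  The witness language L consists of the data words having a pair of positions 2i, 2i+1 that
  carry different data; its complement contains every stuttered word
  (a1,d1)(a1,d1)...(an,dn)(an,dn). Suppose some SAFA with m sets accepts the complement and feed
  it such a word with n > m distinct data. Consider the transitions that read the second copies.
  If one of them tests !p(h), then h contains only data read so far, so a fresh datum passes the
  same test. Otherwise, by pigeonhole, two of them (at pairs i < j) test p(h) for the same h;
  sets only grow, so d_i passes the test made at pair j in place of d_j. Either way neither
  datum involved occurs later in the word, so the remaining run is unaffected and the automaton
  accepts a word of L.
*)

theory Submission
  imports Defs
begin

fun stutter :: "'x list \<Rightarrow> 'x list" where
  "stutter [] = []"
| "stutter (x # xs) = x # x # stutter xs"

lemma length_stutter [simp]: "length (stutter xs) = 2 * length xs"
  by (induction xs) auto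

lemma set_stutter [simp]: "set (stutter xs) = set xs"
  by (induction xs) auto

lemma nth_stutter_odd: "i < length xs \<Longrightarrow> stutter xs ! Suc (2 * i) = xs ! i"
  by (induction xs arbitrary: i) (auto simp: nth_Cons split: nat.split)

lemma drop_stutter: "drop (2 * i) (stutter xs) = stutter (drop i xs)"
  by (induction xs arbitrary: i) (auto simp: drop_Cons split: nat.split)

lemma stutter_update_odd:
  "i < length xs \<Longrightarrow>
     (stutter xs)[Suc (2 * i) := z] = stutter (take i xs) @ [xs ! i, z] @ stutter (drop (Suc i) xs)"
proof (induction xs arbitrary: i)
  case (Cons x xs)
  then show ?case by (cases i) auto
qed simp

lemma stutter_in_data_words [simp]: "stutter xs \<in> data_words Sig \<longleftrightarrow> xs \<in> data_words Sig"
  by (simp add: data_words_def)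

lemma distinct_nth_notin_set_drop: "distinct xs \<Longrightarrow> i \<le> j \<Longrightarrow> xs ! i \<notin> set (drop (Suc j) xs)"
  by (auto simp: in_set_conv_nth nth_eq_iff_index_eq)

lemma run_append: "run M cf (u @ v) cf' \<longleftrightarrow> (\<exists>cf''. run M cf u cf'' \<and> run M cf'' v cf')"
  by (induction u arbitrary: cf) auto

definition step_via :: "'a safa \<Rightarrow> cond \<Rightarrow> op \<Rightarrow> 'd config \<Rightarrow> 'a \<times> 'd \<Rightarrow> 'd config \<Rightarrow> bool" where
  "step_via M c oper cf x cf' \<longleftrightarrow> (fst cf, fst x, c, oper, fst cf') \<in> delta M
     \<and> cond_holds c (snd cf) (snd x) \<and> snd cf' = apply_op oper (snd cf) (snd x)"

lemma step_iff_step_via: "step M cf x cf' \<longleftrightarrow> (\<exists>c oper. step_via M c oper cf x cf')"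
  by (auto simp: step_def step_via_def)

lemma step_sets_between:
  assumes "step M cf x cf'"
  shows "snd cf h \<subseteq> snd cf' h" "snd cf' h \<subseteq> insert (snd x) (snd cf h)"
proof -
  from assms obtain oper where "snd cf' = apply_op oper (snd cf) (snd x)"
    unfolding step_def by blast
  then show "snd cf h \<subseteq> snd cf' h" "snd cf' h \<subseteq> insert (snd x) (snd cf h)"
    by (cases oper; simp add: apply_op_def; blast)+
qed

lemma run_sets_subset: "run M cf w cf' \<Longrightarrow> snd cf' h \<subseteq> snd cf h \<union> snd ` set w"
proof (induction w arbitrary: cf)
  case (Cons x w)
  then obtain cf'' where "step M cf x cf''" and "run M cf'' w cf'"
    by auto
  then have "snd cf'' h \<subseteq> insert (snd x) (snd cf h)" and "snd cf' h \<subseteq> snd cf'' h \<union> snd ` set w"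
    using Cons.IH step_sets_between(2) by blast+
  then show ?case by auto
qed simp

lemma step_agree_outside:
  assumes "step M (q, S) x (q', T)" "snd x \<notin> X" "\<forall>h. S h - X = S' h - X"
  obtains T' where "step M (q, S') x (q', T')" "\<forall>h. T h - X = T' h - X"
proof -
  from assms(1) obtain c oper where via: "step_via M c oper (q, S) x (q', T)"
    by (auto simp: step_iff_step_via)
  have "cond_holds c S' (snd x)"
    using via assms(2,3) by (auto simp: step_via_def cond_holds_def split: cond.splits)
  then have "step M (q, S') x (q', apply_op oper S' (snd x))"
    using via by (auto simp: step_def step_via_def)
  moreover have "\<forall>h. T h - X = apply_op oper S' (snd x) h - X"
    using via assms(3) by (auto simp: step_via_def apply_op_def split: op.splits)
  ultimately show thesis by (rule that)
qed

lemma run_agree_outside: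
  assumes "run M (q, S) w cf" "\<forall>x\<in>set w. snd x \<notin> X" "\<forall>h. S h - X = S' h - X"
  obtains cf' where "run M (q, S') w cf'" "fst cf' = fst cf"
  using assms
proof (induction w arbitrary: q S S' thesis)
  case (Cons x w)
  then obtain q'' T where "step M (q, S) x (q'', T)" "run M (q'', T) w cf" by auto
  moreover obtain T' where "step M (q, S') x (q'', T')" "\<forall>h. T h - X = T' h - X"
    using step_agree_outside[OF \<open>step M (q, S) x (q'', T)\<close>] Cons.prems(3,4) by auto
  moreover have "\<forall>x\<in>set w. snd x \<notin> X"
    using Cons.prems(3) by simp
  ultimately obtain cf' where "run M (q'', T') w cf'" "fst cf' = fst cf"
    using Cons.IH[where q = q'' and S = T and S' = T'] by blast
  with \<open>step M (q, S') x (q'', T')\<close> show thesis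
    using Cons.prems(1) run.simps(2) by blast
qed simp

definition trace :: "'a safa \<Rightarrow> (nat \<Rightarrow> 'd config) \<Rightarrow> ('a \<times> 'd) list \<Rightarrow> bool" where
  "trace M f w \<longleftrightarrow> (\<forall>j < length w. step M (f j) (w ! j) (f (Suc j)))"

lemma trace_run: "trace M f w \<Longrightarrow> run M (f 0) w (f (length w))"
proof (induction w arbitrary: f)
  case (Cons x w)
  then have "step M (f 0) x (f (Suc 0))" and "trace M (\<lambda>j. f (Suc j)) w"
    by (fastforce simp: trace_def)+
  with Cons.IH have "step M (f 0) x (f (Suc 0))" "run M (f (Suc 0)) w (f (length (x # w)))"
    by auto
  then show ?case by (simp only: run.simps) blast
qed simp

lemma run_obtain_trace:
  assumes "run M cf w cf'"
  obtains f where "trace M f w" "f 0 = cf" "f (length w) = cf'"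
  using assms
proof (induction w arbitrary: cf thesis)
  case Nil
  show ?case using Nil.prems(1)[of "\<lambda>_. cf"] Nil.prems(2) by (simp add: trace_def)
next
  case (Cons x w)
  then obtain cf'' where "step M cf x cf''" "run M cf'' w cf'" by auto
  moreover obtain g where "trace M g w" "g 0 = cf''" "g (length w) = cf'"
    using Cons.IH \<open>run M cf'' w cf'\<close> by blast
  moreover have "trace M (case_nat cf g) (x # w)"
    unfolding trace_def
  proof (intro allI impI)
    fix j assume "j < length (x # w)"
    then show "step M (case_nat cf g j) ((x # w) ! j) (case_nat cf g (Suc j))"
      using \<open>step M cf x cf''\<close> \<open>g 0 = cf''\<close> \<open>trace M g w\<close>
      by (cases j) (simp_all add: trace_def)
  qed
  ultimately show ?case using Cons.prems(1) by simp
qed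

lemma lang_obtain_trace:
  assumes "w \<in> lang M"
  obtains f where "trace M f w" "f 0 = (init M, \<lambda>_. {})" "fst (f (length w)) \<in> final M"
proof -
  obtain cf where "run M (init M, \<lambda>_. {}) w cf" "fst cf \<in> final M"
    using assms by (auto simp: lang_def)
  then show thesis
    using run_obtain_trace that by metis
qed

lemma trace_take: "trace M f w \<Longrightarrow> trace M f (take p w)"
  by (simp add: trace_def)

lemma trace_drop: "trace M f w \<Longrightarrow> trace M (\<lambda>j. f (p + j)) (drop p w)"
  by (simp add: trace_def)

lemma trace_sets_mono:
  assumes "trace M f w" "i \<le> j" "j \<le> length w"
  shows "snd (f i) h \<subseteq> snd (f j) h"
  using assms(2,3)
proof (induction j rule: dec_induct)
  case (step n)
  then have "step M (f n) (w ! n) (f (Suc n))"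
    using assms(1) by (simp add: trace_def)
  then have "snd (f n) h \<subseteq> snd (f (Suc n)) h"
    by (rule step_sets_between(1))
  with step show ?case by auto
qed simp

lemma trace_replace_datum:
  assumes "trace M f w" "p < length w"
    and "step_via M c oper (f p) (w ! p) (f (Suc p))" "cond_holds c (snd (f p)) y"
    and "\<forall>x\<in>set (drop (Suc p) w). snd x \<notin> {snd (w ! p), y}"
  obtains cf where "run M (f 0) (w[p := (fst (w ! p), y)]) cf" "fst cf = fst (f (length w))"
proof -
  define T where "T = apply_op oper (snd (f p)) y"
  have step: "step M (f p) (fst (w ! p), y) (fst (f (Suc p)), T)"
    using assms(3,4) by (auto simp: step_def step_via_def T_def)
  have agree: "\<forall>h. snd (f (Suc p)) h - {snd (w ! p), y} = T h - {snd (w ! p), y}"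
    using assms(3) by (auto simp: step_via_def T_def apply_op_def split: op.splits)
  have "Suc p + length (drop (Suc p) w) = length w"
    using assms(2) by simp
  then have "run M (fst (f (Suc p)), snd (f (Suc p))) (drop (Suc p) w) (f (length w))"
    using trace_run[OF trace_drop[OF assms(1), of "Suc p"]] by (simp only: add_0_right prod.collapse)
  then obtain cf where suffix: "run M (fst (f (Suc p)), T) (drop (Suc p) w) cf"
    and final: "fst cf = fst (f (length w))"
    by (rule run_agree_outside[OF _ assms(5) agree])
  have "run M (f 0) (take p w) (f p)"
    using trace_run[OF trace_take[OF assms(1), of p]] assms(2) by simp
  with step suffix have "run M (f 0) (take p w @ (fst (w ! p), y) # drop (Suc p) w) cf"
    by (meson run.simps(2) run_append)
  with final show thesis
    using that assms(2) by (simp add: upd_conv_take_nth_drop)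
qed

lemma wf_safa_finite_names: "wf_safa Sig M \<Longrightarrow> finite (names M)"
  by (simp add: wf_safa_def)

lemma wf_safa_condition_name:
  "wf_safa Sig M \<Longrightarrow> (q, a, P h, oper, q') \<in> delta M \<Longrightarrow> h \<in> names M"
  unfolding wf_safa_def by fastforce

lemma pigeonhole_lessThan:
  assumes "finite A" "\<And>i. i < n \<Longrightarrow> g i \<in> A" "card A < n"
  obtains i j where "i < j" "j < n" "g i = g j"
proof -
  have "card (g ` {..<n}) \<le> card A"
    using assms(1,2) by (intro card_mono) auto
  then have "\<not> inj_on g {..<n}"
    using assms(3) by (intro pigeonhole) simp
  then show thesis
    using that unfolding inj_on_def by (metis lessThan_iff linorder_neqE_nat)
qed

context
  fixes M :: "'a safa" and xs :: "('a \<times> 'd) list" and f :: "nat \<Rightarrow> 'd config"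
  assumes trace: "trace M f (stutter xs)"
    and start: "f 0 = (init M, \<lambda>_. {})"
    and accept: "fst (f (2 * length xs)) \<in> final M"
    and distinct: "distinct (map snd xs)"
begin

lemma nth_datum_notin_later_data:
  "i \<le> j \<Longrightarrow> j < length xs \<Longrightarrow> snd (xs ! i) \<notin> snd ` set (drop (Suc j) xs)"
  using distinct_nth_notin_set_drop[OF distinct, of i j] by (simp add: drop_map)

lemma stutter_update_in_lang:
  assumes "i < length xs"
    and "step_via M c oper (f (Suc (2 * i))) (xs ! i) (f (Suc (Suc (2 * i))))"
    and "cond_holds c (snd (f (Suc (2 * i)))) y" "y \<notin> snd ` set (drop (Suc i) xs)"
  shows "(stutter xs)[Suc (2 * i) := (fst (xs ! i), y)] \<in> lang M"
proof -
  let ?w = "stutter xs"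
  have p: "Suc (2 * i) < length ?w" and wi: "?w ! Suc (2 * i) = xs ! i"
    using assms(1) by (simp_all add: nth_stutter_odd)
  have "drop (Suc (Suc (2 * i))) ?w = stutter (drop (Suc i) xs)"
    using drop_stutter[of "Suc i" xs] by simp
  then have avoid: "\<forall>x\<in>set (drop (Suc (Suc (2 * i))) ?w). snd x \<notin> {snd (?w ! Suc (2 * i)), y}"
    using nth_datum_notin_later_data[of i i] assms(1,4) wi by (auto simp: image_iff)
  obtain cf where run: "run M (f 0) (?w[Suc (2 * i) := (fst (?w ! Suc (2 * i)), y)]) cf"
    and "fst cf = fst (f (length ?w))"
    by (rule trace_replace_datum[OF trace p _ _ avoid, of c oper]) (use assms(2,3) wi in simp_all)
  with accept have "fst cf \<in> final M" by simp
  with run start wi show ?thesis unfolding lang_def by (intro CollectI exI[of _ cf]) simp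
qed

text \<open>A negative test at pair \<open>i\<close> is only ever failed by data read before, so a fresh datum
  passes it as well.\<close>

lemma stutter_update_fresh_in_lang:
  assumes "infinite (UNIV :: 'd set)" "i < length xs"
    and "step_via M (NP h) oper (f (Suc (2 * i))) (xs ! i) (f (Suc (Suc (2 * i))))"
  obtains y where "y \<noteq> snd (xs ! i)" "(stutter xs)[Suc (2 * i) := (fst (xs ! i), y)] \<in> lang M"
proof -
  obtain y :: 'd where y: "y \<notin> snd ` set xs"
    using ex_new_if_finite[OF assms(1), of "snd ` set xs"] by auto
  have "snd (f (Suc (2 * i))) h \<subseteq> snd ` set (take (Suc (2 * i)) (stutter xs))"
    using run_sets_subset[OF trace_run[OF trace_take[OF trace, of "Suc (2 * i)"]], of h]
      start assms(2) by simp
  also have "\<dots> \<subseteq> snd ` set xs"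
    by (metis image_mono set_stutter set_take_subset)
  finally have "cond_holds (NP h) (snd (f (Suc (2 * i)))) y"
    using y by (auto simp: cond_holds_def)
  moreover have "y \<noteq> snd (xs ! i)" "y \<notin> snd ` set (drop (Suc i) xs)"
    using y assms(2) by (auto dest: in_set_dropD)
  ultimately show thesis
    using that stutter_update_in_lang[OF assms(2,3)] by blast
qed

text \<open>Sets only grow, so the datum of pair \<open>i\<close> still passes the test \<open>p(h)\<close> at pair \<open>j\<close>.\<close>

lemma stutter_update_earlier_in_lang:
  assumes "i < j" "j < length xs"
    and "step_via M (P h) oper (f (Suc (2 * i))) (xs ! i) (f (Suc (Suc (2 * i))))"
    and "step_via M (P h) oper' (f (Suc (2 * j))) (xs ! j) (f (Suc (Suc (2 * j))))"
  shows "(stutter xs)[Suc (2 * j) := (fst (xs ! j), snd (xs ! i))] \<in> lang M"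
proof -
  have "snd (xs ! i) \<in> snd (f (Suc (2 * i))) h"
    using assms(3) by (simp add: step_via_def cond_holds_def)
  also have "\<dots> \<subseteq> snd (f (Suc (2 * j))) h"
    using trace_sets_mono[OF trace, of "Suc (2 * i)" "Suc (2 * j)"] assms(1,2) by simp
  finally have "cond_holds (P h) (snd (f (Suc (2 * j)))) (snd (xs ! i))"
    by (simp add: cond_holds_def)
  then show ?thesis
    using stutter_update_in_lang[OF assms(2,4)] nth_datum_notin_later_data[of i j] assms(1,2)
    by simp
qed

end

lemma lang_contains_broken_stutter:
  fixes xs :: "('a \<times> 'd) list"
  assumes "wf_safa Sig M" "infinite (UNIV :: 'd set)"
    and "stutter xs \<in> lang M" "distinct (map snd xs)" "card (names M) < length xs"
  shows "\<exists>i y. i < length xs \<and> y \<noteq> snd (xs ! i)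
           \<and> (stutter xs)[Suc (2 * i) := (fst (xs ! i), y)] \<in> lang M"
proof -
  let ?n = "length xs"
  obtain f where trace: "trace M f (stutter xs)" and start: "f 0 = (init M, \<lambda>_. {})"
    and "fst (f (length (stutter xs))) \<in> final M"
    using assms(3) by (rule lang_obtain_trace)
  then have accept: "fst (f (2 * ?n)) \<in> final M" by simp
  have "\<exists>c oper. step_via M c oper (f (Suc (2 * i))) (xs ! i) (f (Suc (Suc (2 * i))))"
    if "i < ?n" for i
  proof -
    have "step M (f (Suc (2 * i))) (stutter xs ! Suc (2 * i)) (f (Suc (Suc (2 * i))))"
      using trace that by (simp add: trace_def)
    with that show ?thesis by (simp add: step_iff_step_via nth_stutter_odd)
  qed
  then obtain C Op where via:
    "\<And>i. i < ?n \<Longrightarrow> step_via M (C i) (Op i) (f (Suc (2 * i))) (xs ! i) (f (Suc (Suc (2 * i))))"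
    by metis
  note update_fresh = stutter_update_fresh_in_lang[OF trace start accept assms(4,2)]
  note update_earlier = stutter_update_earlier_in_lang[OF trace start accept assms(4)]
  consider (negative) i h where "i < ?n" "C i = NP h" | (positive) "\<forall>i < ?n. \<exists>h. C i = P h"
    by (metis cond.exhaust)
  then show ?thesis
  proof cases
    case negative
    obtain y where "y \<noteq> snd (xs ! i)" "(stutter xs)[Suc (2 * i) := (fst (xs ! i), y)] \<in> lang M"
      by (rule update_fresh[OF negative(1) via[OF negative(1), unfolded negative(2)]])
    with negative(1) show ?thesis by blast
  next
    case positive
    then obtain H where H: "\<And>i. i < ?n \<Longrightarrow> C i = P (H i)" by metis
    have "H i \<in> names M" if "i < ?n" for i
      using via[OF that] H[OF that] wf_safa_condition_name[OF assms(1)]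
      by (auto simp: step_via_def)
    then obtain i j where ij: "i < j" "j < ?n" "H i = H j"
      using pigeonhole_lessThan[OF wf_safa_finite_names[OF assms(1)] _ assms(5)] by blast
    have "(stutter xs)[Suc (2 * j) := (fst (xs ! j), snd (xs ! i))] \<in> lang M"
      by (rule update_earlier[OF ij(1,2), of "H i" "Op i" "Op j"])
         (use via[of i] via[of j] H[of i] H[of j] ij in auto)
    moreover have "snd (xs ! i) \<noteq> snd (xs ! j)"
      using assms(4) ij by (simp add: distinct_conv_nth)
    ultimately show ?thesis
      using ij(2) by blast
  qed
qed

(* States 0 and 1 skip the pairs of positions (2i, 2i+1); the move 0 \<rightarrow> 2 stores the first datum of a
   pair in set 0, the move 2 \<rightarrow> 3 requires the second datum to be different, and state 3 reads the
   rest of the word. *)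
definition unequal_pair_safa :: "'a set \<Rightarrow> 'a safa" where
  "unequal_pair_safa Sig = \<lparr>states = {0, 1, 2, 3}, init = 0, final = {3}, names = {0},
     delta = {(q, a, c, oper, q'). a \<in> Sig \<and> (c = P 0 \<or> c = NP 0) \<and>
        ((q = 0 \<and> q' = 1 \<and> oper = Nop) \<or> (q = 1 \<and> q' = 0 \<and> oper = Nop)
       \<or> (q = 0 \<and> q' = 2 \<and> oper = Ins 0) \<or> (q = 2 \<and> q' = 3 \<and> oper = Nop \<and> c = NP 0)
       \<or> (q = 3 \<and> q' = 3 \<and> oper = Nop))}\<rparr>"

lemma wf_unequal_pair_safa: "wf_safa Sig (unequal_pair_safa Sig)"
  by (auto simp: wf_safa_def unequal_pair_safa_def)

lemma run_unequal_pair_safa_stutter: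
  "run (unequal_pair_safa Sig) (0, S) (stutter xs) cf \<Longrightarrow> fst cf = 0"
proof (induction xs arbitrary: S)
  case (Cons x xs)
  then obtain cf1 cf2 where "step (unequal_pair_safa Sig) (0, S) x cf1"
    and "step (unequal_pair_safa Sig) cf1 x cf2" and run: "run (unequal_pair_safa Sig) cf2 (stutter xs) cf"
    by auto
  then have "fst cf2 = 0"
    by (auto simp: step_def unequal_pair_safa_def cond_holds_def apply_op_def)
  with run have "run (unequal_pair_safa Sig) (0, snd cf2) (stutter xs) cf"
    by (metis prod.collapse)
  then show ?case by (rule Cons.IH)
qed simp

lemma stutter_notin_lang_unequal_pair_safa: "stutter xs \<notin> lang (unequal_pair_safa Sig)"
  using run_unequal_pair_safa_stutter by (fastforce simp: lang_def unequal_pair_safa_def)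

lemma step_unequal_pair_safa_Nop:
  assumes "fst x \<in> Sig" "(q, q') \<in> {(0, 1), (1, 0), (3, 3)}"
  shows "step (unequal_pair_safa Sig) (q, S) x (q', S)"
  unfolding step_iff_step_via step_via_def
  using assms by (intro exI[of _ "if snd x \<in> S 0 then P 0 else NP 0"] exI[of _ Nop])
    (auto simp: unequal_pair_safa_def cond_holds_def apply_op_def)

lemma run_unequal_pair_safa_skip:
  "xs \<in> data_words Sig \<Longrightarrow> run (unequal_pair_safa Sig) (0, S) (stutter xs) (0, S)"
  by (induction xs) (auto simp: data_words_def intro!: exI step_unequal_pair_safa_Nop)

lemma run_unequal_pair_safa_accept:
  "w \<in> data_words Sig \<Longrightarrow> run (unequal_pair_safa Sig) (3, S) w (3, S)"
  by (induction w) (auto simp: data_words_def intro!: exI step_unequal_pair_safa_Nop)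

lemma broken_stutter_in_lang_unequal_pair_safa:
  fixes xs :: "('a \<times> 'd) list"
  assumes "xs \<in> data_words Sig" "i < length xs" "y \<noteq> snd (xs ! i)"
  shows "(stutter xs)[Suc (2 * i) := (fst (xs ! i), y)] \<in> lang (unequal_pair_safa Sig)"
proof -
  let ?M = "unequal_pair_safa Sig" and ?S = "(\<lambda>_. {}) :: nat \<Rightarrow> 'd set"
  let ?S' = "?S(0 := {snd (xs ! i)})"
  have "take i xs \<in> data_words Sig" "stutter (drop (Suc i) xs) \<in> data_words Sig"
    and xi: "fst (xs ! i) \<in> Sig"
    using assms(1,2) by (auto simp: data_words_def dest: in_set_takeD in_set_dropD)
  then have "run ?M (0, ?S) (stutter (take i xs)) (0, ?S)"
    and "run ?M (3, ?S') (stutter (drop (Suc i) xs)) (3, ?S')"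
    using run_unequal_pair_safa_skip run_unequal_pair_safa_accept by blast+
  moreover have "step ?M (0, ?S) (xs ! i) (2, ?S')" and "step ?M (2, ?S') (fst (xs ! i), y) (3, ?S')"
    using xi assms(3) by (auto simp: step_def unequal_pair_safa_def cond_holds_def apply_op_def)
  ultimately have "run ?M (0, ?S)
      (stutter (take i xs) @ [xs ! i, (fst (xs ! i), y)] @ stutter (drop (Suc i) xs)) (3, ?S')"
    by (simp only: run_append append_Cons append_Nil run.simps) blast
  then show ?thesis
    by (auto simp: lang_def stutter_update_odd[OF assms(2)] unequal_pair_safa_def)
qed

lemma obtain_distinct_data_word:
  assumes "infinite (UNIV :: 'd set)" "a \<in> Sig"
  obtains xs :: "('a \<times> 'd) list"
  where "xs \<in> data_words Sig" "distinct (map snd xs)" "length xs = n"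
proof -
  obtain g :: "nat \<Rightarrow> 'd" where "inj g"
    using infinite_countable_subset[OF assms(1)] by blast
  show thesis
  proof (rule that)
    show "map (\<lambda>j. (a, g j)) [0..<n] \<in> data_words Sig"
      using assms(2) by (auto simp: data_words_def)
    show "distinct (map snd (map (\<lambda>j. (a, g j)) [0..<n]))"
      using inj_on_subset[OF \<open>inj g\<close> subset_UNIV] by (simp add: distinct_map comp_def)
  qed simp
qed

theorem lemma8:
  fixes Sig :: "'a set"
  assumes "finite Sig" and "Sig \<noteq> {}"
    and "countable (UNIV :: 'd set)" and "infinite (UNIV :: 'd set)"
  shows "\<exists>M :: 'a safa. wf_safa Sig M \<and>
           \<not> (\<exists>M' :: 'a safa. wf_safa Sig M' \<and>
                (lang M' :: ('a \<times> 'd) list set) = data_words Sig - lang M)"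
proof (intro exI[of _ "unequal_pair_safa Sig"] conjI notI wf_unequal_pair_safa)
  assume "\<exists>M' :: 'a safa. wf_safa Sig M' \<and>
            (lang M' :: ('a \<times> 'd) list set) = data_words Sig - lang (unequal_pair_safa Sig)"
  then obtain M' :: "'a safa" where wf: "wf_safa Sig M'"
    and compl: "(lang M' :: ('a \<times> 'd) list set) = data_words Sig - lang (unequal_pair_safa Sig)"
    by blast
  obtain a where "a \<in> Sig"
    using assms(2) by blast
  then obtain xs :: "('a \<times> 'd) list" where xs: "xs \<in> data_words Sig" "distinct (map snd xs)"
    and "length xs = Suc (card (names M'))"
    by (rule obtain_distinct_data_word[OF assms(4)])
  then have "stutter xs \<in> lang M'" and "card (names M') < length xs"
    by (simp_all add: compl stutter_notin_lang_unequal_pair_safa)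
  then obtain i y where "i < length xs" "y \<noteq> snd (xs ! i)"
    and broken: "(stutter xs)[Suc (2 * i) := (fst (xs ! i), y)] \<in> lang M'"
    using lang_contains_broken_stutter[OF wf assms(4) _ xs(2)] by blast
  then have "(stutter xs)[Suc (2 * i) := (fst (xs ! i), y)] \<in> lang (unequal_pair_safa Sig)"
    by (intro broken_stutter_in_lang_unequal_pair_safa[OF xs(1)])
  with broken compl show False
    by blast
qed

end
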